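(* Let $x,z\in\mathbb{R}^n$ be nonzero with $xx^T\neq zz^T$. Define $\theta\in[0,\pi/2]$ by $$\cos\theta=\max_{y\in\mathbb{R}^n,\ \mathbf{X}y\neq0}\frac{e^T\mathbf{X}y}{\|e\|\,\|\mathbf{X}y\|}.$$ Then $$\sin\theta=\frac{(\|z\|\sin\phi)^2}{\|e\|}=\frac{\sin^2\phi}{\sqrt{(\rho^2-1)^2+2\rho^2\sin^2\phi}}.$$
   Context: $\rho=\|x\|/\|z\|$ and $\phi=\arccos\big(x^Tz/(\|x\|\|z\|)\big)\in[0,\pi]$. $\mathrm{vec}$ is column-stacking vectorization; $e=\mathrm{vec}(xx^T-zz^T)\in\mathbb{R}^{n^2}$ (so $\|e\|=\|xx^T-zz^T\|_F$), and $\mathbf{X}\in\mathbb{R}^{n^2\times n}$ is the matrix with $\mathbf{X}u=\mathrm{vec}(xu^T+ux^T)$ for all $u\in\mathbb{R}^n$. *)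

theory Defs
  imports "HOL-Analysis.Analysis"
begin

definition outer :: "real^'n \<Rightarrow> real^'n \<Rightarrow> real^'n^'n" where
  "outer u v = (\<chi> i j. u $ i * v $ j)"

text \<open>The ordering of the n^2 coordinates (column stacking) is immaterial for
  inner products and norms, which are all the statement uses.\<close>
definition vecm :: "real^'n^'n \<Rightarrow> real^('n \<times> 'n)" where
  "vecm A = (\<chi> p. A $ fst p $ snd p)"

definition Xmap :: "real^'n \<Rightarrow> real^'n \<Rightarrow> real^('n \<times> 'n)" where
  "Xmap x u = vecm (outer x u + outer u x)"

end

theory Submission
  imports Defs
begin

text \<open>Write \<open>z = \<alpha> x + w\<close> with \<open>w \<perp> x\<close>. Then \<open>e = \<^bold>X y\<^sub>0 - vec(w w\<^sup>T)\<close> for an explicit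
  \<open>y\<^sub>0\<close>, and \<open>vec(w w\<^sup>T)\<close> is orthogonal to the range of \<open>\<^bold>X\<close> because
  \<open>\<langle>w w\<^sup>T, x y\<^sup>T\<rangle> = \<langle>w,x\<rangle>\<langle>w,y\<rangle> = 0\<close>. So \<open>\<^bold>X y\<^sub>0\<close> is the orthogonal projection of \<open>e\<close> onto
  that range, \<open>\<theta>\<close> is the angle between \<open>e\<close> and the range, and
  \<open>sin \<theta> = \<parallel>w w\<^sup>T\<parallel> / \<parallel>e\<parallel> = \<parallel>w\<parallel>\<^sup>2 / \<parallel>e\<parallel> = (\<parallel>z\<parallel> sin \<phi>)\<^sup>2 / \<parallel>e\<parallel>\<close>.\<close>

lemma best_cosine_of_orthogonal_decomposition:
  fixes e p r :: "'a::real_inner"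
  assumes "e = p - r" and "p \<in> V" and "p \<noteq> 0" and orth: "\<And>v. v \<in> V \<Longrightarrow> inner r v = 0"
  defines "S \<equiv> {inner e v / (norm e * norm v) | v. v \<in> V \<and> v \<noteq> 0}"
  shows "(\<exists>\<theta>\<in>{0..pi/2}. cos \<theta> \<in> S \<and> (\<forall>s\<in>S. s \<le> cos \<theta>)) \<and>
         (\<forall>\<theta>\<in>{0..pi/2}. cos \<theta> \<in> S \<and> (\<forall>s\<in>S. s \<le> cos \<theta>) \<longrightarrow> sin \<theta> = norm r / norm e)"
proof -
  have inner_e: "inner e v = inner p v" if "v \<in> V" for v
    using orth[OF that] by (simp add: assms(1) inner_diff_left)
  have pythagoras: "(norm e)\<^sup>2 = (norm p)\<^sup>2 + (norm r)\<^sup>2"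
    using norm_add_Pythagorean[of p "- r"] orth[OF \<open>p \<in> V\<close>]
    by (simp add: assms(1) orthogonal_def inner_commute)
  have "norm p > 0" using \<open>p \<noteq> 0\<close> by simp
  moreover have "norm p \<le> norm e"
    by (rule power2_le_imp_le) (use pythagoras in simp_all)
  ultimately have "norm e > 0" by linarith
  define c where "c = norm p / norm e"
  have "c \<in> S"
  proof -
    have "inner e p / (norm e * norm p) = (norm p * norm p) / (norm e * norm p)"
      by (simp add: inner_e[OF \<open>p \<in> V\<close>] flip: power2_norm_eq_inner power2_eq_square)
    also have "\<dots> = c" using \<open>norm p > 0\<close> by (simp add: c_def)
    finally show ?thesis using assms(2,3) unfolding S_def by blast
  qed
  moreover have "s \<le> c" if "s \<in> S" for s
  proof -
    obtain v where v: "v \<in> V" "v \<noteq> 0" and s: "s = inner e v / (norm e * norm v)"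
      using \<open>s \<in> S\<close> unfolding S_def by blast
    have "inner e v \<le> norm p * norm v"
      using inner_e[OF v(1)] norm_cauchy_schwarz[of p v] by simp
    then have "s \<le> (norm p * norm v) / (norm e * norm v)"
      unfolding s using \<open>norm e > 0\<close> v(2) by (intro divide_right_mono) auto
    also have "\<dots> = c" using v(2) by (simp add: c_def)
    finally show ?thesis .
  qed
  ultimately have maximal_iff: "cos \<theta> \<in> S \<and> (\<forall>s\<in>S. s \<le> cos \<theta>) \<longleftrightarrow> cos \<theta> = c" for \<theta>
    by (auto intro: order.antisym)
  have "0 \<le> c" "c \<le> 1"
    using \<open>norm p \<le> norm e\<close> \<open>norm e > 0\<close> by (auto simp: c_def)
  then have "arccos c \<in> {0..pi/2}" and "cos (arccos c) = c"
    using arccos_lbound[of c] arccos_le_pi2[of c] by auto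
  moreover have "sin \<theta> = norm r / norm e" if "\<theta> \<in> {0..pi/2}" "cos \<theta> = c" for \<theta>
  proof -
    have "(sin \<theta>)\<^sup>2 = 1 - c\<^sup>2"
      using sin_cos_squared_add[of \<theta>] \<open>cos \<theta> = c\<close> by simp
    also have "\<dots> = ((norm e)\<^sup>2 - (norm p)\<^sup>2) / (norm e)\<^sup>2"
      using \<open>norm e > 0\<close> by (simp add: c_def power_divide diff_divide_distrib)
    also have "\<dots> = (norm r / norm e)\<^sup>2"
      by (simp add: pythagoras power_divide)
    finally have "(sin \<theta>)\<^sup>2 = (norm r / norm e)\<^sup>2" .
    moreover have "sin \<theta> \<ge> 0" using that(1) by (intro sin_ge_zero) auto
    ultimately show ?thesis by (simp add: power2_eq_iff_nonneg)
  qed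
  ultimately show ?thesis unfolding maximal_iff by blast
qed

lemma vecm_nth [simp]: "vecm A $ p = A $ fst p $ snd p"
  by (simp add: vecm_def)

lemma outer_nth [simp]: "outer u v $ i $ j = u $ i * v $ j"
  by (simp add: outer_def)

lemma vecm_add: "vecm (A + B) = vecm A + vecm B"
  by (simp add: vec_eq_iff)

lemma vecm_eq_0_iff: "vecm A = 0 \<longleftrightarrow> A = 0"
  by (auto simp: vec_eq_iff)

lemma vecm_diff: "vecm (A - B) = vecm A - vecm B"
  by (simp add: vec_eq_iff)

lemma inner_vecm_outer:
  "inner (vecm (outer a b)) (vecm (outer c d)) = inner a c * inner b d"
proof -
  have "inner (vecm (outer a b)) (vecm (outer c d))
        = (\<Sum>i\<in>UNIV. \<Sum>j\<in>UNIV. (a $ i * b $ j) * (c $ i * d $ j))"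
    unfolding inner_vec_def UNIV_Times_UNIV[symmetric] sum.cartesian_product
    by (simp add: case_prod_beta)
  also have "\<dots> = (\<Sum>i\<in>UNIV. a $ i * c $ i) * (\<Sum>j\<in>UNIV. b $ j * d $ j)"
    unfolding sum_product by (intro sum.cong refl) (simp add: algebra_simps)
  finally show ?thesis by (simp add: inner_vec_def)
qed

lemma norm_vecm_outer_self: "norm (vecm (outer w w)) = (norm w)\<^sup>2"
  by (simp add: norm_eq_sqrt_inner inner_vecm_outer)

lemma Xmap_eq: "Xmap x y = vecm (outer x y) + vecm (outer y x)"
  by (simp add: Xmap_def vecm_add)

lemma norm_Xmap_sq: "(norm (Xmap x y))\<^sup>2 = 2 * (inner x x * inner y y) + 2 * (inner x y)\<^sup>2"
  unfolding power2_norm_eq_inner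
  by (simp add: Xmap_eq inner_add_left inner_add_right inner_vecm_outer inner_commute power2_eq_square)

lemma Xmap_eq_0_iff: "Xmap x y = 0 \<longleftrightarrow> x = 0 \<or> y = 0"
proof
  assume "Xmap x y = 0"
  then have "inner x x * inner y y + (inner x y)\<^sup>2 = 0"
    using norm_Xmap_sq[of x y] by simp
  then have "inner x x * inner y y = 0"
    by (simp add: add_nonneg_eq_0_iff)
  then show "x = 0 \<or> y = 0" by simp
qed (auto simp: Xmap_eq vec_eq_iff outer_def)

lemma inner_vecm_outer_Xmap_eq_0:
  assumes "inner x w = 0"
  shows "inner (vecm (outer w w)) (Xmap x y) = 0"
  using assms by (simp add: Xmap_eq inner_add_right inner_vecm_outer inner_commute)

text \<open>Expanding \<open>z z\<^sup>T\<close> gives \<open>x x\<^sup>T - z z\<^sup>T + w w\<^sup>T = (1 - \<alpha>\<^sup>2) x x\<^sup>T - \<alpha> (x w\<^sup>T + w x\<^sup>T)\<close>,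
  which is \<open>\<^bold>X\<close> applied to \<open>((1 - \<alpha>\<^sup>2) / 2) x - \<alpha> w\<close>.\<close>
lemma vecm_outer_diff_eq_Xmap:
  assumes "z = \<alpha> *\<^sub>R x + w"
  shows "vecm (outer x x - outer z z)
         = Xmap x (((1 - \<alpha>\<^sup>2) / 2) *\<^sub>R x - \<alpha> *\<^sub>R w) - vecm (outer w w)"
  unfolding vec_eq_iff
  by (simp add: assms Xmap_def vecm_add power2_eq_square algebra_simps divide_simps)

lemma inner_reject_eq_0:
  fixes x z :: "'a::real_inner"
  assumes "x \<noteq> 0"
  shows "inner x (z - (inner x z / inner x x) *\<^sub>R x) = 0"
  using assms by (simp add: inner_diff_right)

lemma vecm_outer_diff_decomposition:
  fixes x z :: "real^'n"
  assumes "x \<noteq> 0" and "outer x x \<noteq> outer z z"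
  defines "w \<equiv> z - (inner x z / inner x x) *\<^sub>R x"
  obtains y where "Xmap x y \<noteq> 0" and "vecm (outer x x - outer z z) = Xmap x y - vecm (outer w w)"
proof -
  define \<alpha> where "\<alpha> = inner x z / inner x x"
  define y where "y = ((1 - \<alpha>\<^sup>2) / 2) *\<^sub>R x - \<alpha> *\<^sub>R w"
  have "inner x w = 0" unfolding w_def by (rule inner_reject_eq_0[OF assms(1)])
  have e_eq: "vecm (outer x x - outer z z) = Xmap x y - vecm (outer w w)"
    unfolding y_def by (rule vecm_outer_diff_eq_Xmap) (simp add: w_def \<alpha>_def)
  have "y \<noteq> 0"
  proof
    assume "y = 0"
    then have "inner x y = 0" by simp
    then have "((1 - \<alpha>\<^sup>2) / 2) * inner x x = 0"
      using \<open>inner x w = 0\<close> by (simp add: y_def inner_diff_right)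
    then have "\<alpha>\<^sup>2 = 1" using assms(1) by simp
    then have "\<alpha> *\<^sub>R w = 0" and "\<alpha> \<noteq> 0"
      using \<open>y = 0\<close> by (auto simp: y_def)
    then have "w = 0" by simp
    then have "vecm (outer x x - outer z z) = 0"
      unfolding e_eq \<open>y = 0\<close> by (simp add: vec_eq_iff Xmap_def)
    then show False using assms(2) by (simp add: vecm_eq_0_iff)
  qed
  then show ?thesis using that e_eq assms(1) by (simp add: Xmap_eq_0_iff)
qed

lemma sin_arccos_inner_sq:
  fixes x z :: "'a::real_inner"
  shows "(sin (arccos (inner x z / (norm x * norm z))))\<^sup>2
         = 1 - (inner x z / (norm x * norm z))\<^sup>2"
proof -
  have "\<bar>inner x z / (norm x * norm z)\<bar> \<le> 1"
    using Cauchy_Schwarz_ineq2[of x z] by (cases "x = 0 \<or> z = 0") (auto simp: abs_div)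
  then show ?thesis
    by (simp add: sin_arccos_abs abs_square_le_1)
qed

lemma norm_reject_sq:
  fixes x z :: "'a::real_inner"
  assumes "x \<noteq> 0"
  shows "(norm (z - (inner x z / inner x x) *\<^sub>R x))\<^sup>2
         = (norm z * sin (arccos (inner x z / (norm x * norm z))))\<^sup>2"
proof (cases "z = 0")
  case False
  have "(norm (z - (inner x z / inner x x) *\<^sub>R x))\<^sup>2 = inner z z - (inner x z)\<^sup>2 / inner x x"
    unfolding power2_norm_eq_inner using assms
    by (simp add: inner_diff_left inner_diff_right inner_commute power2_eq_square field_simps)
  also have "\<dots> = (norm z)\<^sup>2 * (1 - (inner x z / (norm x * norm z))\<^sup>2)"
    using assms False by (simp add: power_divide power_mult_distrib power2_norm_eq_inner field_simps)
  finally show ?thesis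
    by (simp add: power_mult_distrib sin_arccos_inner_sq)
qed simp

lemma norm_vecm_outer_diff_sq:
  "(norm (vecm (outer x x - outer z z)))\<^sup>2 = (inner x x)\<^sup>2 + (inner z z)\<^sup>2 - 2 * (inner x z)\<^sup>2"
  unfolding power2_norm_eq_inner vecm_diff
  by (simp add: inner_diff_left inner_diff_right inner_vecm_outer inner_commute power2_eq_square)

lemma norm_vecm_outer_diff:
  fixes x z :: "real^'n"
  assumes "z \<noteq> 0"
  defines "\<rho> \<equiv> norm x / norm z"
      and "\<phi> \<equiv> arccos (inner x z / (norm x * norm z))"
  shows "norm (vecm (outer x x - outer z z))
         = (norm z)\<^sup>2 * sqrt ((\<rho>\<^sup>2 - 1)\<^sup>2 + 2 * \<rho>\<^sup>2 * (sin \<phi>)\<^sup>2)"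
proof -
  define a b where "a = inner x x" and "b = inner z z"
  define D where "D = (\<rho>\<^sup>2 - 1)\<^sup>2 + 2 * \<rho>\<^sup>2 * (sin \<phi>)\<^sup>2"
  have "b > 0" using assms(1) by (simp add: b_def)
  have \<rho>_sq: "\<rho>\<^sup>2 = a / b"
    by (simp add: \<rho>_def a_def b_def power_divide power2_norm_eq_inner)
  have inner_sq: "(inner x z)\<^sup>2 = a * b * (1 - (sin \<phi>)\<^sup>2)"
    using assms(1) unfolding \<phi>_def sin_arccos_inner_sq
    by (simp add: a_def b_def power_divide power_mult_distrib power2_norm_eq_inner)
  have "(norm (vecm (outer x x - outer z z)))\<^sup>2 = b\<^sup>2 * D"
    using \<open>b > 0\<close> unfolding norm_vecm_outer_diff_sq inner_sq D_def \<rho>_sq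
    by (simp add: a_def[symmetric] b_def[symmetric] field_simps power2_eq_square)
  then have "norm (vecm (outer x x - outer z z)) = sqrt (b\<^sup>2 * D)"
    by (metis norm_ge_zero real_sqrt_abs real_sqrt_power abs_of_nonneg)
  then show ?thesis
    using \<open>b > 0\<close> by (simp add: D_def b_def real_sqrt_mult power2_norm_eq_inner)
qed

theorem mainTheorem6:
  fixes x z :: "real^'n"
  assumes "x \<noteq> 0" and "z \<noteq> 0" and "outer x x \<noteq> outer z z"
  defines "e \<equiv> vecm (outer x x - outer z z)"
      and "\<rho> \<equiv> norm x / norm z"
      and "\<phi> \<equiv> arccos (inner x z / (norm x * norm z))"
      and "S \<equiv> {inner (vecm (outer x x - outer z z)) (Xmap x y) / (norm (vecm (outer x x - outer z z)) * norm (Xmap x y)) | y. Xmap x y \<noteq> 0}"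
  shows "(\<exists>\<theta>\<in>{0..pi/2}. cos \<theta> \<in> S \<and> (\<forall>s\<in>S. s \<le> cos \<theta>)) \<and>
         (\<forall>\<theta>\<in>{0..pi/2}. cos \<theta> \<in> S \<and> (\<forall>s\<in>S. s \<le> cos \<theta>) \<longrightarrow>
             sin \<theta> = (norm z * sin \<phi>)^2 / norm e \<and>
             (norm z * sin \<phi>)^2 / norm e
               = (sin \<phi>)^2 / sqrt ((\<rho>^2 - 1)^2 + 2 * \<rho>^2 * (sin \<phi>)^2))"
proof -
  define w where "w = z - (inner x z / inner x x) *\<^sub>R x"
  obtain y\<^sub>0 where "Xmap x y\<^sub>0 \<noteq> 0" and e_eq: "e = Xmap x y\<^sub>0 - vecm (outer w w)"
    using vecm_outer_diff_decomposition[OF assms(1,3)] unfolding e_def w_def by blast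
  have "inner x w = 0" unfolding w_def by (rule inner_reject_eq_0[OF assms(1)])
  have S_eq: "S = {inner e v / (norm e * norm v) | v. v \<in> range (Xmap x) \<and> v \<noteq> 0}"
    unfolding S_def e_def by blast
  have angle: "(\<exists>\<theta>\<in>{0..pi/2}. cos \<theta> \<in> S \<and> (\<forall>s\<in>S. s \<le> cos \<theta>)) \<and>
        (\<forall>\<theta>\<in>{0..pi/2}. cos \<theta> \<in> S \<and> (\<forall>s\<in>S. s \<le> cos \<theta>) \<longrightarrow>
            sin \<theta> = norm (vecm (outer w w)) / norm e)"
    unfolding S_eq using \<open>Xmap x y\<^sub>0 \<noteq> 0\<close> \<open>inner x w = 0\<close>
    by (intro best_cosine_of_orthogonal_decomposition[OF e_eq])
      (auto simp: inner_vecm_outer_Xmap_eq_0)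
  have norm_r: "norm (vecm (outer w w)) = (norm z * sin \<phi>)\<^sup>2"
    unfolding norm_vecm_outer_self w_def \<phi>_def by (rule norm_reject_sq[OF assms(1)])
  have "norm e = (norm z)\<^sup>2 * sqrt ((\<rho>\<^sup>2 - 1)\<^sup>2 + 2 * \<rho>\<^sup>2 * (sin \<phi>)\<^sup>2)"
    unfolding e_def \<rho>_def \<phi>_def by (rule norm_vecm_outer_diff[OF assms(2)])
  then have "(norm z * sin \<phi>)\<^sup>2 / norm e = (sin \<phi>)\<^sup>2 / sqrt ((\<rho>\<^sup>2 - 1)\<^sup>2 + 2 * \<rho>\<^sup>2 * (sin \<phi>)\<^sup>2)"
    using assms(2) by (simp add: power_mult_distrib)
  then show ?thesis using angle unfolding norm_r by blast
qed

end
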